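(* Let $s\ge0$, $p\in[1,+\infty)$. There is a function $\theta:(0,+\infty)\to(0,+\infty)$ with $\lim_{\varepsilon\to0^+}\theta(\varepsilon)=0$ (depending only on $d,p,s$) such that the following holds. For every $f\in B^{s,\infty}_p(\mathbb R^d)$, every $\kappa\in\mathbb R$ and every $\varepsilon\in(0,1)$ there is a constant $C>0$ such that for all $x\in\mathbb R^d$ and all $j,l\in\mathbb N$ with $l\in[(1-\varepsilon)j,(1+\varepsilon)j]$, $$|Q_lf(x)|\le C\,2^{\left(\frac dp-s+\theta(\varepsilon)\right)j}\,\|f\|_{l,\lambda_j(x),\varepsilon}+C\,2^{\kappa j}.$$
   Context: Standing setup. $\psi^{(1)},\dots,\psi^{(2^d-1)}$ are the wavelets associated with an orthogonal multiresolution analysis of $L^2(\mathbb R^d)$ with scaling function $\varphi$; they are smooth and have fast decay: for every $N\ge0$ there is $C_N$ with $|\psi^{(i)}(x)|\le C_N(1+\|x\|)^{-N}$, $\|\cdot\|$ the supremum norm. For $j\ge0$, $k\in\mathbb Z^d$, the dyadic cube $\lambda=(j,k)$ is $\prod_{m=1}^d[k_m2^{-j},(k_m+1)2^{-j})$; $\Lambda_j$ is the set of such cubes; $\lambda_j(x)$ is the unique cube of $\Lambda_j$ containing $x$; $\psi^{(i)}_\lambda(x)=\psi^{(i)}(2^jx-k)$. For $f$ set $C_k=\int\overline{\varphi(x-k)}f$, $c^{(i)}_\lambda=2^{dj}\int\overline{\psi^{(i)}_\lambda}f$ for $\lambda\in\Lambda_j$, $Q_lf(x)=\sum_i\sum_{\lambda\in\Lambda_l}c^{(i)}_\lambda\psi^{(i)}_\lambda(x)$.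 $B^{s,\infty}_p(\mathbb R^d)$ is the set of $f$ with $(C_k)\in\ell^p$ and $\sup_j2^{(s-d/p)j}(\sum_i\sum_{\lambda\in\Lambda_j}|c^{(i)}_\lambda|^p)^{1/p}<\infty$. For a dyadic cube $\lambda_0$, $l\in\mathbb N$ and $\varepsilon>0$, let $\Lambda_{l,\lambda_0,\varepsilon}=\{\lambda\in\Lambda_l:\ (\lambda+B(0,2^{-(1-\varepsilon)l}))\cap\lambda_0\neq\emptyset\}$ ($B(0,r)$ the open sup-norm ball) and $$\|f\|_{l,\lambda_0,\varepsilon}=\Big(\sum_i\sum_{\lambda\in\Lambda_{l,\lambda_0,\varepsilon}}\big|c^{(i)}_\lambda2^{(s-d/p)l}\big|^p\Big)^{1/p}.$$ *)

theory Defs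
  imports "HOL-Analysis.Analysis"
begin

section \<open>Basic notation on R^d (d = CARD('n)) and Z^d\<close>

definition supnorm :: "real^'n \<Rightarrow> real" where
  "supnorm x = Max (range (\<lambda>m. \<bar>x $ m\<bar>))"

definition ivec :: "int^'n \<Rightarrow> real^'n" where
  "ivec k = (\<chi> m. real_of_int (k $ m))"

definition dcube :: "nat \<Rightarrow> int^'n \<Rightarrow> (real^'n) set" where
  "dcube j k = {x. \<forall>m. real_of_int (k $ m) / 2 ^ j \<le> x $ m \<and> x $ m < (real_of_int (k $ m) + 1) / 2 ^ j}"

text \<open>index k of the cube lambda_j(x) of Lambda_j containing x\<close>
definition cube_idx :: "nat \<Rightarrow> real^'n \<Rightarrow> int^'n" where
  "cube_idx j x = (\<chi> m. \<lfloor>2 ^ j * x $ m\<rfloor>)"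

coinductive smooth :: "(real^'n \<Rightarrow> complex) \<Rightarrow> bool" where
  "(\<forall>x. f differentiable at x) \<Longrightarrow>
   (\<forall>b\<in>Basis. smooth (\<lambda>x. frechet_derivative f (at x) b)) \<Longrightarrow> smooth f"

definition L2 :: "(real^'n \<Rightarrow> complex) \<Rightarrow> bool" where
  "L2 g \<longleftrightarrow> g \<in> borel_measurable lebesgue \<and> integrable lebesgue (\<lambda>x. (cmod (g x))\<^sup>2)"

definition l2inner :: "(real^'n \<Rightarrow> complex) \<Rightarrow> (real^'n \<Rightarrow> complex) \<Rightarrow> complex" where
  "l2inner g h = (LINT x|lebesgue. g x * cnj (h x))"

definition l2norm :: "(real^'n \<Rightarrow> complex) \<Rightarrow> real" where
  "l2norm g = sqrt (LINT x|lebesgue. (cmod (g x))\<^sup>2)"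

definition in_l2_closure :: "(real^'n \<Rightarrow> complex) set \<Rightarrow> (real^'n \<Rightarrow> complex) \<Rightarrow> bool" where
  "in_l2_closure S g \<longleftrightarrow> L2 g \<and> (\<forall>e>0. \<exists>h\<in>S. l2norm (\<lambda>x. g x - h x) < e)"

text \<open>closed linear subspace of L^2 (functions, so closedness includes a.e. modifications)\<close>
definition closed_l2_subspace :: "(real^'n \<Rightarrow> complex) set \<Rightarrow> bool" where
  "closed_l2_subspace V \<longleftrightarrow> (\<forall>g\<in>V. L2 g) \<and> (\<lambda>x. 0) \<in> V \<and>
     (\<forall>g\<in>V. \<forall>h\<in>V. \<forall>a b. (\<lambda>x. a * g x + b * h x) \<in> V) \<and>
     (\<forall>g. in_l2_closure V g \<longrightarrow> g \<in> V)"

definition lin_span :: "'i set \<Rightarrow> ('i \<Rightarrow> real^'n \<Rightarrow> complex) \<Rightarrow> (real^'n \<Rightarrow> complex) set" where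
  "lin_span I e = {(\<lambda>x. \<Sum>i\<in>K. a i * e i x) | K a. finite K \<and> K \<subseteq> I}"

definition is_onb :: "'i set \<Rightarrow> ('i \<Rightarrow> real^'n \<Rightarrow> complex) \<Rightarrow> (real^'n \<Rightarrow> complex) set \<Rightarrow> bool" where
  "is_onb I e W \<longleftrightarrow> (\<forall>i\<in>I. e i \<in> W) \<and>
     (\<forall>i\<in>I. \<forall>i'\<in>I. l2inner (e i) (e i') = (if i = i' then 1 else 0)) \<and>
     (\<forall>g\<in>W. in_l2_closure (lin_span I e) g)"

definition orthogonal_MRA :: "(int \<Rightarrow> (real^'n \<Rightarrow> complex) set) \<Rightarrow> (real^'n \<Rightarrow> complex) \<Rightarrow> bool" where
  "orthogonal_MRA V \<phi> \<longleftrightarrow>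
     (\<forall>j. closed_l2_subspace (V j)) \<and>
     (\<forall>j. V j \<subseteq> V (j + 1)) \<and>
     (\<forall>g. L2 g \<longrightarrow> in_l2_closure (\<Union>j. V j) g) \<and>
     (\<forall>g. (\<forall>j. g \<in> V j) \<longrightarrow> l2norm g = 0) \<and>
     (\<forall>j g. g \<in> V j \<longleftrightarrow> (\<lambda>x. g (2 *\<^sub>R x)) \<in> V (j + 1)) \<and>
     is_onb UNIV (\<lambda>k::int^'n. \<lambda>x. \<phi> (x - ivec k)) (V 0)"

abbreviation widx :: "'n itself \<Rightarrow> nat set" where
  "widx _ \<equiv> {1 .. 2 ^ CARD('n) - 1}"

definition MRA_wavelets :: "(real^'n \<Rightarrow> complex) \<Rightarrow> (nat \<Rightarrow> real^'n \<Rightarrow> complex) \<Rightarrow> bool" where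
  "MRA_wavelets \<phi> \<psi> \<longleftrightarrow> (\<exists>V. orthogonal_MRA V \<phi> \<and>
     is_onb (widx TYPE('n) \<times> (UNIV :: (int^'n) set)) (\<lambda>(i, k). \<lambda>x. \<psi> i (x - ivec k))
       {g \<in> V 1. \<forall>h\<in>V 0. l2inner g h = 0})"

definition wavelet_setup :: "(real^'n \<Rightarrow> complex) \<Rightarrow> (nat \<Rightarrow> real^'n \<Rightarrow> complex) \<Rightarrow> bool" where
  "wavelet_setup \<phi> \<psi> \<longleftrightarrow> MRA_wavelets \<phi> \<psi> \<and>
     (\<forall>i\<in>widx TYPE('n). smooth (\<psi> i) \<and>
        (\<forall>N::nat. \<exists>CN. \<forall>x. cmod (\<psi> i x) \<le> CN * (1 + supnorm x) powr (- real N)))"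

definition psi_at :: "(nat \<Rightarrow> real^'n \<Rightarrow> complex) \<Rightarrow> nat \<Rightarrow> nat \<Rightarrow> int^'n \<Rightarrow> real^'n \<Rightarrow> complex" where
  "psi_at \<psi> i j k x = \<psi> i ((2 ^ j) *\<^sub>R x - ivec k)"

definition scoef :: "(real^'n \<Rightarrow> complex) \<Rightarrow> (real^'n \<Rightarrow> complex) \<Rightarrow> int^'n \<Rightarrow> complex" where
  "scoef \<phi> f k = (LINT x|lebesgue. cnj (\<phi> (x - ivec k)) * f x)"

definition wcoef :: "(nat \<Rightarrow> real^'n \<Rightarrow> complex) \<Rightarrow> (real^'n \<Rightarrow> complex) \<Rightarrow> nat \<Rightarrow> nat \<Rightarrow> int^'n \<Rightarrow> complex" where
  "wcoef \<psi> f i j k = 2 ^ (CARD('n) * j) * (LINT x|lebesgue. cnj (psi_at \<psi> i j k x) * f x)"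

definition Qop :: "(nat \<Rightarrow> real^'n \<Rightarrow> complex) \<Rightarrow> (real^'n \<Rightarrow> complex) \<Rightarrow> nat \<Rightarrow> real^'n \<Rightarrow> complex" where
  "Qop \<psi> f l x = (\<Sum>i\<in>widx TYPE('n). \<Sum>\<^sub>\<infinity>k. wcoef \<psi> f i l k * psi_at \<psi> i l k x)"

definition besov :: "(real^'n \<Rightarrow> complex) \<Rightarrow> (nat \<Rightarrow> real^'n \<Rightarrow> complex) \<Rightarrow> real \<Rightarrow> real \<Rightarrow> (real^'n \<Rightarrow> complex) set" where
  "besov \<phi> \<psi> s p = {f.
     (\<forall>k. integrable lebesgue (\<lambda>x. cnj (\<phi> (x - ivec k)) * f x)) \<and>
     (\<forall>i\<in>widx TYPE('n). \<forall>j k. integrable lebesgue (\<lambda>x. cnj (psi_at \<psi> i j k x) * f x)) \<and>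
     (\<lambda>k. cmod (scoef \<phi> f k) powr p) summable_on UNIV \<and>
     (\<forall>i\<in>widx TYPE('n). \<forall>j. (\<lambda>k. cmod (wcoef \<psi> f i j k) powr p) summable_on UNIV) \<and>
     (\<exists>B. \<forall>j. 2 powr ((s - real CARD('n) / p) * real j) *
          (\<Sum>i\<in>widx TYPE('n). \<Sum>\<^sub>\<infinity>k. cmod (wcoef \<psi> f i j k) powr p) powr (1 / p) \<le> B)}"

text \<open>Lambda_{l,lambda_0,eps} for lambda_0 = (j0,k0)\<close>
definition Lam_near :: "nat \<Rightarrow> nat \<Rightarrow> int^'n \<Rightarrow> real \<Rightarrow> (int^'n) set" where
  "Lam_near l j0 k0 \<epsilon> = {k. {a + b | a b. a \<in> dcube l k \<and> supnorm b < 2 powr (- (1 - \<epsilon>) * real l)}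
                              \<inter> dcube j0 k0 \<noteq> {}}"

definition locnorm :: "(nat \<Rightarrow> real^'n \<Rightarrow> complex) \<Rightarrow> (real^'n \<Rightarrow> complex) \<Rightarrow> real \<Rightarrow> real \<Rightarrow>
     nat \<Rightarrow> nat \<Rightarrow> int^'n \<Rightarrow> real \<Rightarrow> real" where
  "locnorm \<psi> f s p l j0 k0 \<epsilon> =
     (\<Sum>i\<in>widx TYPE('n). \<Sum>k\<in>Lam_near l j0 k0 \<epsilon>.
        cmod (wcoef \<psi> f i l k * 2 powr ((s - real CARD('n) / p) * real l)) powr p) powr (1 / p)"

end

(*
  Write Q_l f(x) as the sum over i and k of c_{i,l,k} psi_i(2^l x - k) and split the indices k.
  For k in Lambda_{l,lambda_j(x),eps} the coefficient is at most 2^{(d/p-s)l} times the local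
  norm. For every other k the sup-distance from 2^l x to k is at least 2^{eps l}, so the decay
  of psi_i of an order N, chosen large in terms of eps and kappa, gains a factor
  2^{-eps (N - 2d) l} that absorbs the global Besov bound 2^{(d/p-s)l} on the coefficients.
  In both cases the leftover decay (1 + |2^l x - k|)^{-2d} is summable over Z^d uniformly in x,
  being dominated by a product of one-dimensional sums of (1 + |y - t|)^{-2}. Finally
  |l - j| <= eps j turns 2^{(d/p-s)l} into 2^{(d/p-s+theta(eps))j} with
  theta(eps) = (|d/p - s| + 1) eps.
*)
theory Submission
  imports Defs
begin

section \<open>Lattice sums of the decay weight\<close>

lemma sum_inverse_square_nat_le: "(\<Sum>n<N. 1 / (real n + 1)^2) \<le> 2"
proof -
  have "(\<Sum>n<N. 1 / (real n + 1)^2) \<le> 2 - 2 / (real N + 1)"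
  proof (induction N)
    case (Suc N)
    have "2 / (real N + 1) - 2 / (real N + 2) = 2 / ((real N + 1) * (real N + 2))"
      by (simp add: field_simps)
    moreover have "(real N + 1) * (real N + 2) \<le> 2 * (real N + 1)^2"
      by (simp add: power2_eq_square algebra_simps)
    ultimately have "1 / (real N + 1)^2 \<le> 2 / (real N + 1) - 2 / (real N + 2)"
      by (simp add: divide_simps)
    then show ?case using Suc.IH by (simp add: add.commute)
  qed simp
  then show ?thesis by (smt (verit) divide_nonneg_nonneg of_nat_0_le_iff)
qed

lemma sum_inverse_square_nonneg_int_le:
  assumes "finite S" "S \<subseteq> {0..}"
  shows "(\<Sum>t\<in>S. 1 / (1 + \<bar>real_of_int t\<bar>)^2) \<le> 2"
proof -
  have inj: "inj_on nat S"
    using assms(2) by (intro inj_onI) (metis atLeast_iff nat_eq_iff2 subsetD)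
  obtain N where N: "nat ` S \<subseteq> {..<N}"
    using assms(1) finite_nat_iff_bounded by (metis finite_imageI)
  have "(\<Sum>t\<in>S. 1 / (1 + \<bar>real_of_int t\<bar>)^2) = (\<Sum>n\<in>nat ` S. 1 / (real n + 1)^2)"
    using assms(2) by (subst sum.reindex[OF inj]) (auto intro!: sum.cong simp: add.commute)
  also have "\<dots> \<le> (\<Sum>n<N. 1 / (real n + 1)^2)"
    using N by (intro sum_mono2) auto
  also have "\<dots> \<le> 2" by (rule sum_inverse_square_nat_le)
  finally show ?thesis .
qed

lemma sum_inverse_square_int_le:
  assumes "finite T"
  shows "(\<Sum>t\<in>T. 1 / (1 + \<bar>real_of_int t\<bar>)^2) \<le> 4"
proof -
  let ?f = "\<lambda>t::int. 1 / (1 + \<bar>real_of_int t\<bar>)^2"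
  have "sum ?f (T - {0..}) = sum ?f (uminus ` (T - {0..}))"
    by (subst sum.reindex) (auto intro: inj_onI)
  then have "sum ?f T = sum ?f (T \<inter> {0..}) + sum ?f (uminus ` (T - {0..}))"
    using assms by (metis sum.Int_Diff)
  also have "\<dots> \<le> 2 + 2"
    using assms by (intro add_mono sum_inverse_square_nonneg_int_le) auto
  finally show ?thesis by simp
qed

lemma sum_inverse_square_shifted_int_le:
  assumes "finite T"
  shows "(\<Sum>t\<in>T. 1 / (1 + \<bar>y - real_of_int t\<bar>)^2) \<le> 16"
proof -
  define a where "a = \<lfloor>y\<rfloor>"
  have shift: "1 / (1 + \<bar>y - real_of_int t\<bar>)^2 \<le> 4 * (1 / (1 + \<bar>real_of_int (t - a)\<bar>)^2)" for t
  proof -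
    have "1 + \<bar>real_of_int (t - a)\<bar> \<le> 2 * (1 + \<bar>y - real_of_int t\<bar>)"
      unfolding a_def by (smt (verit) of_int_diff of_int_floor_le real_of_int_floor_add_one_gt)
    then have "(1 + \<bar>real_of_int (t - a)\<bar>)^2 \<le> (2 * (1 + \<bar>y - real_of_int t\<bar>))^2"
      by (intro power_mono) auto
    also have "\<dots> = 4 * (1 + \<bar>y - real_of_int t\<bar>)^2"
      by (simp only: power_mult_distrib) simp
    finally show ?thesis by (simp add: field_simps)
  qed
  have "(\<Sum>t\<in>T. 1 / (1 + \<bar>y - real_of_int t\<bar>)^2)
      \<le> 4 * (\<Sum>t\<in>T. 1 / (1 + \<bar>real_of_int (t - a)\<bar>)^2)"
    using shift by (simp add: sum_distrib_left sum_mono)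
  also have "(\<Sum>t\<in>T. 1 / (1 + \<bar>real_of_int (t - a)\<bar>)^2)
      = (\<Sum>u\<in>(\<lambda>t. t - a) ` T. 1 / (1 + \<bar>real_of_int u\<bar>)^2)"
    by (subst sum.reindex) (auto intro: inj_onI)
  also have "\<dots> \<le> 4" using assms by (intro sum_inverse_square_int_le) auto
  finally show ?thesis by simp
qed

lemma abs_component_le_supnorm: "\<bar>x $ m\<bar> \<le> supnorm x"
  unfolding supnorm_def by (rule Max_ge) auto

lemma supnorm_nonneg: "0 \<le> supnorm x"
  using abs_component_le_supnorm[of x undefined] by linarith

lemma supnorm_less_iff: "supnorm x < r \<longleftrightarrow> (\<forall>m. \<bar>x $ m\<bar> < r)"
  unfolding supnorm_def by (subst Max_less_iff) auto

lemma vec_components_in_eq_image_PiE: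
  "{x::'a^'n. \<forall>m. x $ m \<in> S m} = vec_lambda ` PiE UNIV S"
proof (intro equalityI subsetI)
  fix x :: "'a^'n" assume "x \<in> {x. \<forall>m. x $ m \<in> S m}"
  then have "vec_nth x \<in> PiE UNIV S" by auto
  then show "x \<in> vec_lambda ` PiE UNIV S" by (metis vec_lambda_eta image_eqI)
qed auto

lemma finite_vec_components_in:
  assumes "\<And>m. finite (S m)"
  shows "finite {x::'a^'n. \<forall>m. x $ m \<in> S m}"
  unfolding vec_components_in_eq_image_PiE using assms by (intro finite_imageI finite_PiE) auto

lemma sum_prod_components_le_prod_sum:
  fixes h :: "'n::finite \<Rightarrow> 'a \<Rightarrow> real"
  assumes "finite F" "\<And>m t. 0 \<le> h m t"
  shows "(\<Sum>k\<in>F. \<Prod>m\<in>UNIV. h m (k $ m)) \<le> (\<Prod>m\<in>UNIV. \<Sum>t\<in>(\<lambda>k. k $ m) ` F. h m t)"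
proof -
  define G where "G m = (\<lambda>k. k $ m) ` F" for m
  have finG: "finite (G m)" for m using assms(1) by (simp add: G_def)
  have "F \<subseteq> vec_lambda ` PiE UNIV G"
    unfolding vec_components_in_eq_image_PiE[symmetric] by (auto simp: G_def)
  moreover have "finite (vec_lambda ` PiE UNIV G)"
    using finG by (intro finite_imageI finite_PiE) auto
  ultimately have "(\<Sum>k\<in>F. \<Prod>m\<in>UNIV. h m (k $ m)) \<le> (\<Sum>k\<in>vec_lambda ` PiE UNIV G. \<Prod>m\<in>UNIV. h m (k $ m))"
    using assms(2) by (intro sum_mono2) (auto intro: prod_nonneg)
  also have "\<dots> = (\<Sum>g\<in>PiE UNIV G. \<Prod>m\<in>UNIV. h m (g m))"
    by (subst sum.reindex) (auto intro: inj_onI)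
  also have "\<dots> = (\<Prod>m\<in>UNIV. \<Sum>t\<in>G m. h m t)"
    using finG by (subst prod_sum_PiE) auto
  finally show ?thesis by (simp add: G_def)
qed

lemma supnorm_decay_le_prod:
  fixes v :: "real^'n"
  shows "(1 + supnorm v) powr (- real (2 * CARD('n))) \<le> (\<Prod>m\<in>UNIV. 1 / (1 + \<bar>v $ m\<bar>)^2)"
proof -
  have pos: "0 < 1 + supnorm v" using supnorm_nonneg[of v] by linarith
  have "(1 + supnorm v) powr (- real (2 * CARD('n))) = 1 / (1 + supnorm v) ^ (2 * CARD('n))"
    using pos by (simp only: powr_minus powr_realpow[OF pos] divide_inverse mult_1)
  also have "\<dots> = (\<Prod>m\<in>(UNIV::'n set). 1 / (1 + supnorm v)^2)"
    by (simp add: power_mult power_one_over)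
  also have "\<dots> \<le> (\<Prod>m\<in>UNIV. 1 / (1 + \<bar>v $ m\<bar>)^2)"
  proof (rule prod_mono)
    fix m
    have "(1 + \<bar>v $ m\<bar>)^2 \<le> (1 + supnorm v)^2"
      using abs_component_le_supnorm[of v m] by (intro power_mono) auto
    then show "0 \<le> 1 / (1 + supnorm v)^2 \<and> 1 / (1 + supnorm v)^2 \<le> 1 / (1 + \<bar>v $ m\<bar>)^2"
      using pos by (auto intro!: divide_left_mono)
  qed
  finally show ?thesis .
qed

lemma sum_lattice_decay_le:
  fixes y :: "real^'n"
  assumes "finite F"
  shows "(\<Sum>k\<in>F. (1 + supnorm (y - ivec k)) powr (- real (2 * CARD('n)))) \<le> 16 ^ CARD('n)"
proof -
  have "(\<Sum>k\<in>F. (1 + supnorm (y - ivec k)) powr (- real (2 * CARD('n))))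
      \<le> (\<Sum>k\<in>F. \<Prod>m\<in>UNIV. 1 / (1 + \<bar>y $ m - real_of_int (k $ m)\<bar>)^2)"
  proof (rule sum_mono)
    fix k
    show "(1 + supnorm (y - ivec k)) powr (- real (2 * CARD('n)))
        \<le> (\<Prod>m\<in>UNIV. 1 / (1 + \<bar>y $ m - real_of_int (k $ m)\<bar>)^2)"
      using supnorm_decay_le_prod[of "y - ivec k"] by (simp add: ivec_def)
  qed
  also have "\<dots> \<le> (\<Prod>m\<in>UNIV. \<Sum>t\<in>(\<lambda>k. k $ m) ` F. 1 / (1 + \<bar>y $ m - real_of_int t\<bar>)^2)"
    using assms by (intro sum_prod_components_le_prod_sum) auto
  also have "\<dots> \<le> (\<Prod>m\<in>(UNIV::'n set). 16)"
    using assms by (intro prod_mono) (auto intro: sum_nonneg sum_inverse_square_shifted_int_le)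
  finally show ?thesis by simp
qed

lemma lattice_decay_summable:
  fixes y :: "real^'n"
  shows "(\<lambda>k. (1 + supnorm (y - ivec k)) powr (- real (2 * CARD('n)))) summable_on UNIV"
proof (rule nonneg_bdd_above_summable_on)
  show "bdd_above (sum (\<lambda>k. (1 + supnorm (y - ivec k)) powr (- real (2 * CARD('n)))) ` {F. F \<subseteq> UNIV \<and> finite F})"
    by (rule bdd_aboveI[where M="16 ^ CARD('n)"]) (use sum_lattice_decay_le in blast)
qed simp

lemma lattice_decay_infsum_le:
  fixes y :: "real^'n"
  shows "(\<Sum>\<^sub>\<infinity>k. (1 + supnorm (y - ivec k)) powr (- real (2 * CARD('n)))) \<le> 16 ^ CARD('n)"
  by (rule infsum_le_finite_sums[OF lattice_decay_summable]) (rule sum_lattice_decay_le)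

section \<open>Dyadic cubes and the neighbourhood index set\<close>

lemma dcube_index_bounds:
  assumes "x \<in> dcube j k"
  shows "real_of_int (k $ m) \<le> 2 ^ j * x $ m" "2 ^ j * x $ m < real_of_int (k $ m) + 1"
  using assms unfolding dcube_def by (auto simp: pos_divide_le_eq pos_less_divide_eq mult.commute)

lemma abs_index_le_of_dcube:
  assumes "x \<in> dcube j k"
  shows "\<bar>real_of_int (k $ m)\<bar> \<le> 2 ^ j * \<bar>x $ m\<bar> + 1"
proof -
  have "\<bar>2 ^ j * x $ m\<bar> = 2 ^ j * \<bar>x $ m\<bar>" by (simp add: abs_mult)
  then show ?thesis using dcube_index_bounds[OF assms, of m] by linarith
qed

lemma abs_component_le_of_dcube:
  assumes "x \<in> dcube j k"
  shows "\<bar>x $ m\<bar> \<le> \<bar>real_of_int (k $ m)\<bar> + 1"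
proof -
  have "\<bar>2 ^ j * x $ m\<bar> \<le> \<bar>real_of_int (k $ m)\<bar> + 1"
    using dcube_index_bounds[OF assms, of m] by linarith
  moreover have "\<bar>x $ m\<bar> \<le> \<bar>2 ^ j * x $ m\<bar>"
    by (simp add: abs_mult mult_le_cancel_right1)
  ultimately show ?thesis by linarith
qed

lemma mem_dcube_cube_idx: "x \<in> dcube j (cube_idx j x)"
  unfolding dcube_def cube_idx_def
  by (auto simp: pos_divide_le_eq pos_less_divide_eq mult.commute)

lemma finite_Lam_near: "finite (Lam_near l j (k0::int^'n) \<epsilon>)"
proof -
  define r where "r = 2 powr (- (1 - \<epsilon>) * real l)"
  define M where "M m = 2 ^ l * (\<bar>real_of_int (k0 $ m)\<bar> + 1 + r) + 1" for m
  have index_bound: "\<bar>real_of_int (k $ m)\<bar> \<le> M m" if k: "k \<in> Lam_near l j k0 \<epsilon>" for k m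
  proof -
    obtain a b where a: "a \<in> dcube l k" and b: "supnorm b < r" and ab: "a + b \<in> dcube j k0"
      using k unfolding Lam_near_def r_def by blast
    have "\<bar>a $ m + b $ m\<bar> \<le> \<bar>real_of_int (k0 $ m)\<bar> + 1"
      using abs_component_le_of_dcube[OF ab, of m] by simp
    moreover have "\<bar>b $ m\<bar> < r" using b supnorm_less_iff by blast
    ultimately have "\<bar>a $ m\<bar> \<le> \<bar>real_of_int (k0 $ m)\<bar> + 1 + r" by linarith
    then have "2 ^ l * \<bar>a $ m\<bar> \<le> 2 ^ l * (\<bar>real_of_int (k0 $ m)\<bar> + 1 + r)"
      by (intro mult_left_mono) auto
    then show ?thesis using abs_index_le_of_dcube[OF a, of m] unfolding M_def by linarith
  qed
  have "Lam_near l j k0 \<epsilon> \<subseteq> {k. \<forall>m. k $ m \<in> {-\<lceil>M m\<rceil>..\<lceil>M m\<rceil>}}"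
  proof (intro subsetI CollectI allI)
    fix k m assume "k \<in> Lam_near l j k0 \<epsilon>"
    then have "\<bar>real_of_int (k $ m)\<bar> \<le> real_of_int \<lceil>M m\<rceil>"
      using index_bound le_of_int_ceiling order_trans by blast
    then show "k $ m \<in> {-\<lceil>M m\<rceil>..\<lceil>M m\<rceil>}" by (simp add: abs_le_iff)
  qed
  then show ?thesis
    by (rule finite_subset) (rule finite_vec_components_in, simp)
qed

lemma notin_Lam_near_imp_supnorm_ge:
  fixes x :: "real^'n"
  assumes "k \<notin> Lam_near l j (cube_idx j x) \<epsilon>"
  shows "2 powr (\<epsilon> * real l) \<le> supnorm ((2 ^ l) *\<^sub>R x - ivec k)"
proof (rule ccontr)
  assume "\<not> ?thesis"
  then have close: "\<bar>2 ^ l * x $ m - real_of_int (k $ m)\<bar> < 2 powr (\<epsilon> * real l)" for m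
    unfolding not_le supnorm_less_iff by (simp add: ivec_def)
  define a :: "real^'n" where "a = (\<chi> m. real_of_int (k $ m) / 2 ^ l)"
  have a: "a \<in> dcube l k" unfolding dcube_def a_def by (auto simp: divide_strict_right_mono)
  have "supnorm (x - a) < 2 powr (- (1 - \<epsilon>) * real l)"
  proof (subst supnorm_less_iff, intro allI)
    fix m
    have "(x - a) $ m = (2 ^ l * x $ m - real_of_int (k $ m)) / 2 ^ l"
      unfolding a_def by (simp add: field_simps)
    then have "\<bar>(x - a) $ m\<bar> = \<bar>2 ^ l * x $ m - real_of_int (k $ m)\<bar> / 2 ^ l"
      by (simp add: abs_divide)
    also have "\<dots> < 2 powr (\<epsilon> * real l) / 2 powr real l"
      using close[of m] by (simp add: divide_strict_right_mono powr_realpow)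
    also have "\<dots> = 2 powr (- (1 - \<epsilon>) * real l)"
      by (simp add: powr_diff[symmetric] algebra_simps)
    finally show "\<bar>(x - a) $ m\<bar> < 2 powr (- (1 - \<epsilon>) * real l)" .
  qed
  then have "x \<in> {a + b | a b. a \<in> dcube l k \<and> supnorm b < 2 powr (- (1 - \<epsilon>) * real l)}"
    using a by force
  then have "k \<in> Lam_near l j (cube_idx j x) \<epsilon>"
    unfolding Lam_near_def using mem_dcube_cube_idx[of x j] by blast
  then show False using assms by blast
qed

section \<open>Bounds on wavelets and coefficients\<close>

lemma norm_infsum_le_weighted:
  fixes g :: "'a \<Rightarrow> 'b::banach"
  assumes "w summable_on A" "infsum w A \<le> K" "0 \<le> M" "\<And>k. k \<in> A \<Longrightarrow> norm (g k) \<le> M * w k"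
  shows "norm (infsum g A) \<le> M * K"
proof -
  have Mw: "(\<lambda>k. M * w k) summable_on A" using assms(1) by (rule summable_on_cmult_right)
  then have "(\<lambda>k. norm (g k)) summable_on A"
    by (rule summable_on_comparison_test) (use assms(4) in auto)
  then have "g summable_on A" by (rule abs_summable_summable)
  then have "norm (infsum g A) \<le> infsum (\<lambda>k. M * w k) A"
    using Mw assms(4) by (intro norm_infsum_le[OF has_sum_infsum has_sum_infsum]) auto
  also have "\<dots> = M * infsum w A" by (rule infsum_cmult_right')
  also have "\<dots> \<le> M * K" using assms(2,3) by (rule mult_left_mono)
  finally show ?thesis .
qed

lemma finite_family_uniform_bound:
  fixes g :: "'i \<Rightarrow> 'a \<Rightarrow> real" and h :: "'a \<Rightarrow> real"
  assumes "finite I" "\<forall>i\<in>I. \<exists>c. \<forall>x. g i x \<le> c * h x" "\<And>x. 0 \<le> h x"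
  obtains C where "0 \<le> C" "\<And>i x. i \<in> I \<Longrightarrow> g i x \<le> C * h x"
proof -
  obtain c where c: "\<And>i x. i \<in> I \<Longrightarrow> g i x \<le> c i * h x"
    using bchoice[OF assms(2)] by blast
  define C where "C = (\<Sum>i\<in>I. max 0 (c i))"
  show ?thesis
  proof (rule that)
    show "0 \<le> C" unfolding C_def by (simp add: sum_nonneg)
    fix i x assume i: "i \<in> I"
    have "max 0 (c i) \<le> C"
      unfolding C_def using assms(1) i by (intro member_le_sum) auto
    then have "c i * h x \<le> C * h x"
      using assms(3)[of x] by (intro mult_right_mono) auto
    then show "g i x \<le> C * h x" using c[OF i, of x] by linarith
  qed
qed

lemma wavelet_uniform_decay:
  fixes \<psi> :: "nat \<Rightarrow> real^'n \<Rightarrow> complex"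
  assumes "wavelet_setup \<phi> \<psi>"
  obtains C where "0 \<le> C"
    "\<And>i x. i \<in> widx TYPE('n) \<Longrightarrow> cmod (\<psi> i x) \<le> C * (1 + supnorm x) powr (- real N)"
proof (rule finite_family_uniform_bound)
  show "\<forall>i\<in>widx TYPE('n). \<exists>c. \<forall>x. cmod (\<psi> i x) \<le> c * (1 + supnorm x) powr (- real N)"
    using assms unfolding wavelet_setup_def by blast
qed (use that in auto)

lemma besov_wcoef_bound:
  fixes \<psi> :: "nat \<Rightarrow> real^'n \<Rightarrow> complex"
  assumes f: "f \<in> besov \<phi> \<psi> s p" and p: "p \<ge> 1"
  obtains B where "0 \<le> B"
    "\<And>i l k. i \<in> widx TYPE('n) \<Longrightarrow> cmod (wcoef \<psi> f i l k) \<le> B * 2 powr ((real CARD('n) / p - s) * real l)"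
proof -
  let ?S = "\<lambda>l. \<Sum>i\<in>widx TYPE('n). \<Sum>\<^sub>\<infinity>k. cmod (wcoef \<psi> f i l k) powr p"
  from f obtain B where B: "\<And>l. 2 powr ((s - real CARD('n) / p) * real l) * ?S l powr (1 / p) \<le> B"
    and summable: "\<And>i l. i \<in> widx TYPE('n) \<Longrightarrow> (\<lambda>k. cmod (wcoef \<psi> f i l k) powr p) summable_on UNIV"
    unfolding besov_def by blast
  have "0 \<le> B" using B[of 0] by (smt (verit) mult_nonneg_nonneg powr_ge_zero)
  then show ?thesis
  proof (rule that)
    fix i l k assume i: "i \<in> widx TYPE('n)"
    have "cmod (wcoef \<psi> f i l k) powr p \<le> (\<Sum>\<^sub>\<infinity>k'. cmod (wcoef \<psi> f i l k') powr p)"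
      using infsum_mono_neutral[of _ "{k}" _ UNIV] summable[OF i] by fastforce
    also have "\<dots> \<le> ?S l"
      by (rule member_le_sum[OF i]) (auto intro: infsum_nonneg)
    finally have "cmod (wcoef \<psi> f i l k) \<le> ?S l powr (1 / p)"
      using p powr_mono2[of "1 / p" "cmod (wcoef \<psi> f i l k) powr p" "?S l"] by (simp add: powr_powr)
    also have "\<dots> = 2 powr ((real CARD('n) / p - s) * real l)
        * (2 powr ((s - real CARD('n) / p) * real l) * ?S l powr (1 / p))"
      by (simp add: mult.assoc[symmetric] powr_add[symmetric] algebra_simps)
    also have "\<dots> \<le> 2 powr ((real CARD('n) / p - s) * real l) * B"
      using B[of l] by (intro mult_left_mono) auto
    finally show "cmod (wcoef \<psi> f i l k) \<le> B * 2 powr ((real CARD('n) / p - s) * real l)"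
      by (simp add: mult.commute)
  qed
qed

lemma wcoef_le_locnorm:
  fixes \<psi> :: "nat \<Rightarrow> real^'n \<Rightarrow> complex"
  assumes i: "i \<in> widx TYPE('n)" and k: "k \<in> Lam_near l j k0 \<epsilon>" and p: "p \<ge> 1"
  shows "cmod (wcoef \<psi> f i l k) \<le> 2 powr ((real CARD('n) / p - s) * real l) * locnorm \<psi> f s p l j k0 \<epsilon>"
proof -
  define t where "t = 2 powr ((s - real CARD('n) / p) * real l)"
  let ?g = "\<lambda>i k. cmod (wcoef \<psi> f i l k * complex_of_real t) powr p"
  have "?g i k \<le> (\<Sum>k\<in>Lam_near l j k0 \<epsilon>. ?g i k)"
    by (rule member_le_sum[OF k]) (auto simp: finite_Lam_near)
  also have "\<dots> \<le> (\<Sum>i\<in>widx TYPE('n). \<Sum>k\<in>Lam_near l j k0 \<epsilon>. ?g i k)"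
    by (rule member_le_sum[OF i, where f="\<lambda>i. \<Sum>k\<in>Lam_near l j k0 \<epsilon>. ?g i k"]) (auto intro: sum_nonneg)
  finally have "(?g i k) powr (1 / p) \<le> locnorm \<psi> f s p l j k0 \<epsilon>"
    unfolding locnorm_def t_def[symmetric] using p by (intro powr_mono2) auto
  then have "cmod (wcoef \<psi> f i l k) * t \<le> locnorm \<psi> f s p l j k0 \<epsilon>"
    using p by (simp add: powr_powr norm_mult t_def)
  then have "cmod (wcoef \<psi> f i l k) \<le> locnorm \<psi> f s p l j k0 \<epsilon> / t"
    by (simp add: pos_le_divide_eq t_def)
  also have "\<dots> = 2 powr ((real CARD('n) / p - s) * real l) * locnorm \<psi> f s p l j k0 \<epsilon>"
    unfolding t_def by (simp add: powr_minus_divide[symmetric] algebra_simps divide_inverse powr_minus[symmetric])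
  finally show ?thesis .
qed

section \<open>Pointwise estimate of Q_l f\<close>

lemma supnorm_decay_mono:
  assumes "D \<le> N"
  shows "(1 + supnorm v) powr (- real N) \<le> (1 + supnorm v) powr (- real D)"
  using assms supnorm_nonneg[of v] by (intro powr_mono) auto

lemma supnorm_decay_split_le:
  assumes "D \<le> N" "0 < R" "R \<le> supnorm v"
  shows "(1 + supnorm v) powr (- real N) \<le> (1 + supnorm v) powr (- real D) * R powr (- (real N - real D))"
proof -
  have "(1 + supnorm v) powr (- real N) = (1 + supnorm v) powr (- real D) * (1 + supnorm v) powr (- (real N - real D))"
    by (simp add: powr_add[symmetric])
  also have "\<dots> \<le> (1 + supnorm v) powr (- real D) * R powr (- (real N - real D))"
    using assms by (intro mult_left_mono powr_mono2') auto
  finally show ?thesis .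
qed

lemma wavelet_term_bound:
  fixes \<psi> :: "nat \<Rightarrow> real^'n \<Rightarrow> complex" and x :: "real^'n" and s p :: real
  defines "a \<equiv> real CARD('n) / p - s" and "D \<equiv> 2 * CARD('n)"
  assumes p: "p \<ge> 1" and i: "i \<in> widx TYPE('n)" and N: "D \<le> N" and C: "0 \<le> C" and B: "0 \<le> B"
    and decay: "\<And>v. cmod (\<psi> i v) \<le> C * (1 + supnorm v) powr (- real N)"
    and coef: "cmod (wcoef \<psi> f i l k) \<le> B * 2 powr (a * real l)"
  shows "cmod (wcoef \<psi> f i l k * psi_at \<psi> i l k x)
    \<le> C * (2 powr (a * real l) * locnorm \<psi> f s p l j (cube_idx j x) \<epsilon>
             + B * 2 powr ((a - \<epsilon> * (real N - real D)) * real l))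
        * (1 + supnorm ((2 ^ l) *\<^sub>R x - ivec k)) powr (- real D)"
proof -
  define v where "v = (2 ^ l) *\<^sub>R x - ivec k"
  define W where "W = (1 + supnorm v) powr (- real D)"
  define L where "L = locnorm \<psi> f s p l j (cube_idx j x) \<epsilon>"
  define X where "X = 2 powr (a * real l) * L"
  define Y where "Y = B * 2 powr ((a - \<epsilon> * (real N - real D)) * real l)"
  have "0 \<le> L" unfolding L_def locnorm_def by simp
  then have XY: "0 \<le> X" "0 \<le> Y" and "0 \<le> W" using B by (simp_all add: X_def Y_def W_def)
  have factor: "cmod (wcoef \<psi> f i l k * psi_at \<psi> i l k x) = cmod (wcoef \<psi> f i l k) * cmod (\<psi> i v)"
    unfolding psi_at_def v_def by (simp add: norm_mult)
  have "cmod (wcoef \<psi> f i l k) * cmod (\<psi> i v) \<le> C * (X + Y) * W"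
  proof (cases "k \<in> Lam_near l j (cube_idx j x) \<epsilon>")
    case True
    have "cmod (wcoef \<psi> f i l k) \<le> X"
      using wcoef_le_locnorm[OF i True p] unfolding X_def L_def a_def .
    moreover have "cmod (\<psi> i v) \<le> C * W"
      using decay[of v] supnorm_decay_mono[OF N, of v] C unfolding W_def
      by (meson mult_left_mono order_trans)
    ultimately have "cmod (wcoef \<psi> f i l k) * cmod (\<psi> i v) \<le> X * (C * W)"
      using XY by (intro mult_mono) auto
    also have "\<dots> \<le> C * (X + Y) * W"
      using XY C \<open>0 \<le> W\<close> by (simp add: algebra_simps)
    finally show ?thesis .
  next
    case False
    have "(1 + supnorm v) powr (- real N) \<le> W * (2 powr (\<epsilon> * real l)) powr (- (real N - real D))"
      unfolding W_def v_def
      by (rule supnorm_decay_split_le[OF N _ notin_Lam_near_imp_supnorm_ge[OF False]]) simp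
    also have "\<dots> = W * 2 powr (- \<epsilon> * (real N - real D) * real l)"
      by (simp add: powr_powr algebra_simps)
    finally have "cmod (\<psi> i v) \<le> C * (W * 2 powr (- \<epsilon> * (real N - real D) * real l))"
      using decay[of v] C by (meson mult_left_mono order_trans)
    with coef have "cmod (wcoef \<psi> f i l k) * cmod (\<psi> i v)
        \<le> (B * 2 powr (a * real l)) * (C * (W * 2 powr (- \<epsilon> * (real N - real D) * real l)))"
      using B by (intro mult_mono) auto
    also have "\<dots> = C * Y * W"
      unfolding Y_def by (simp add: powr_add[symmetric] algebra_simps)
    also have "\<dots> \<le> C * (X + Y) * W"
      using XY C \<open>0 \<le> W\<close> by (simp add: algebra_simps)
    finally show ?thesis .
  qed
  then show ?thesis unfolding factor X_def Y_def L_def W_def v_def .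
qed

lemma Qop_bound:
  fixes \<psi> :: "nat \<Rightarrow> real^'n \<Rightarrow> complex" and x :: "real^'n" and s p :: real
  defines "a \<equiv> real CARD('n) / p - s" and "D \<equiv> 2 * CARD('n)"
  assumes p: "p \<ge> 1" and N: "D \<le> N" and C: "0 \<le> C" and B: "0 \<le> B"
    and decay: "\<And>i v. i \<in> widx TYPE('n) \<Longrightarrow> cmod (\<psi> i v) \<le> C * (1 + supnorm v) powr (- real N)"
    and coef: "\<And>i k. i \<in> widx TYPE('n) \<Longrightarrow> cmod (wcoef \<psi> f i l k) \<le> B * 2 powr (a * real l)"
  shows "cmod (Qop \<psi> f l x) \<le> real (card (widx TYPE('n))) * 16 ^ CARD('n) * C
      * (2 powr (a * real l) * locnorm \<psi> f s p l j (cube_idx j x) \<epsilon>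
         + B * 2 powr ((a - \<epsilon> * (real N - real D)) * real l))"
proof -
  define M where "M = C * (2 powr (a * real l) * locnorm \<psi> f s p l j (cube_idx j x) \<epsilon>
         + B * 2 powr ((a - \<epsilon> * (real N - real D)) * real l))"
  have "0 \<le> M" unfolding M_def locnorm_def using C B by simp
  have "norm (\<Sum>\<^sub>\<infinity>k. wcoef \<psi> f i l k * psi_at \<psi> i l k x) \<le> M * 16 ^ CARD('n)"
    if i: "i \<in> widx TYPE('n)" for i
  proof (rule norm_infsum_le_weighted[OF lattice_decay_summable lattice_decay_infsum_le \<open>0 \<le> M\<close>])
    show "norm (wcoef \<psi> f i l k * psi_at \<psi> i l k x)
        \<le> M * (1 + supnorm ((2 ^ l) *\<^sub>R x - ivec k)) powr (- real (2 * CARD('n)))" for k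
      using wavelet_term_bound[OF p i N[unfolded D_def] C B decay[OF i] coef[OF i, unfolded a_def]]
      unfolding M_def a_def D_def .
  qed
  then have "cmod (Qop \<psi> f l x) \<le> (\<Sum>i\<in>widx TYPE('n). M * 16 ^ CARD('n))"
    unfolding Qop_def by (intro norm_sum[THEN order_trans] sum_mono)
  then show ?thesis by (simp add: M_def mult_ac)
qed

lemma exponent_le_if_close:
  fixes a c e j l :: real
  assumes "\<bar>a\<bar> \<le> c" "0 \<le> e" "0 \<le> j" "(1 - e) * j \<le> l" "l \<le> (1 + e) * j"
  shows "a * l \<le> (a + c * e) * j"
proof -
  have "a * (l - j) \<le> \<bar>a\<bar> * \<bar>l - j\<bar>" by (simp add: abs_mult[symmetric])
  also have "\<dots> \<le> c * (e * j)"
    using assms by (intro mult_mono) (auto simp: abs_le_iff algebra_simps)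
  finally show ?thesis by (simp add: algebra_simps)
qed

lemma exponent_le_if_gain_large:
  fixes a q e j l \<kappa> :: real
  assumes "0 < e" "e < 1" "0 \<le> j" "(1 - e) * j \<le> l" "\<bar>a\<bar> + \<bar>\<kappa>\<bar> / (1 - e) \<le> q"
  shows "(a - q) * l \<le> \<kappa> * j"
proof -
  have "0 \<le> l" using assms(2-4) by (smt (verit) mult_nonneg_nonneg)
  have "(a - q) * l \<le> (\<bar>a\<bar> - q) * l"
    using \<open>0 \<le> l\<close> by (intro mult_right_mono) auto
  also have "\<dots> \<le> - (\<bar>\<kappa>\<bar> / (1 - e)) * l"
    using assms(5) \<open>0 \<le> l\<close> by (intro mult_right_mono) auto
  also have "\<dots> \<le> - (\<bar>\<kappa>\<bar> / (1 - e)) * ((1 - e) * j)"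
    using assms by (intro mult_left_mono_neg) auto
  also have "\<dots> = - \<bar>\<kappa>\<bar> * j" using assms(2) by simp
  also have "\<dots> \<le> \<kappa> * j" using assms(3) by (intro mult_right_mono) auto
  finally show ?thesis .
qed

lemma Qop_bound_in_j:
  fixes \<psi> :: "nat \<Rightarrow> real^'n \<Rightarrow> complex" and x :: "real^'n" and s p :: real and C :: real
  defines "a \<equiv> real CARD('n) / p - s" and "K \<equiv> real (card (widx TYPE('n))) * 16 ^ CARD('n) * C"
  assumes p: "p \<ge> 1" and \<epsilon>: "0 < \<epsilon>" "\<epsilon> < 1" and C: "0 \<le> C" and B: "0 \<le> B"
    and gain: "\<bar>a\<bar> + \<bar>\<kappa>\<bar> / (1 - \<epsilon>) \<le> \<epsilon> * (real N - real (2 * CARD('n)))"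
    and decay: "\<And>i v. i \<in> widx TYPE('n) \<Longrightarrow> cmod (\<psi> i v) \<le> C * (1 + supnorm v) powr (- real N)"
    and coef: "\<And>i k. i \<in> widx TYPE('n) \<Longrightarrow> cmod (wcoef \<psi> f i l k) \<le> B * 2 powr (a * real l)"
    and jl: "(1 - \<epsilon>) * real j \<le> real l" "real l \<le> (1 + \<epsilon>) * real j"
  shows "cmod (Qop \<psi> f l x)
    \<le> K * 2 powr ((a + (\<bar>a\<bar> + 1) * \<epsilon>) * real j) * locnorm \<psi> f s p l j (cube_idx j x) \<epsilon>
      + K * B * 2 powr (\<kappa> * real j)"
proof -
  define L where "L = locnorm \<psi> f s p l j (cube_idx j x) \<epsilon>"
  have "0 \<le> L" unfolding L_def locnorm_def by simp
  have "0 \<le> K" unfolding K_def using C by simp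
  have "0 \<le> \<bar>a\<bar> + \<bar>\<kappa>\<bar> / (1 - \<epsilon>)" using \<epsilon> by simp
  then have "0 \<le> \<epsilon> * (real N - real (2 * CARD('n)))" using gain by linarith
  then have "2 * CARD('n) \<le> N" using \<epsilon> by (simp add: zero_le_mult_iff)
  have "2 powr (a * real l) \<le> 2 powr ((a + (\<bar>a\<bar> + 1) * \<epsilon>) * real j)"
    using exponent_le_if_close[of a "\<bar>a\<bar> + 1" \<epsilon> "real j" "real l"] \<epsilon> jl by simp
  then have near: "K * (2 powr (a * real l) * L) \<le> K * (2 powr ((a + (\<bar>a\<bar> + 1) * \<epsilon>) * real j) * L)"
    using \<open>0 \<le> K\<close> \<open>0 \<le> L\<close> by (intro mult_left_mono mult_right_mono)
  have "2 powr ((a - \<epsilon> * (real N - real (2 * CARD('n)))) * real l) \<le> 2 powr (\<kappa> * real j)"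
    using exponent_le_if_gain_large[OF \<epsilon> _ jl(1) gain] by simp
  then have far: "K * (B * 2 powr ((a - \<epsilon> * (real N - real (2 * CARD('n)))) * real l))
      \<le> K * (B * 2 powr (\<kappa> * real j))"
    using \<open>0 \<le> K\<close> B by (intro mult_left_mono)
  have "cmod (Qop \<psi> f l x)
      \<le> K * (2 powr (a * real l) * L + B * 2 powr ((a - \<epsilon> * (real N - real (2 * CARD('n)))) * real l))"
    using Qop_bound[OF p \<open>2 * CARD('n) \<le> N\<close> C B decay coef[unfolded a_def]]
    unfolding K_def L_def a_def by simp
  also have "\<dots> \<le> K * (2 powr ((a + (\<bar>a\<bar> + 1) * \<epsilon>) * real j) * L) + K * (B * 2 powr (\<kappa> * real j))"
    unfolding distrib_left using near far by (rule add_mono)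
  finally show ?thesis unfolding L_def by (simp only: mult.assoc)
qed

lemma Qop_local_estimate:
  fixes \<psi> :: "nat \<Rightarrow> real^'n \<Rightarrow> complex" and s p :: real
  defines "a \<equiv> real CARD('n) / p - s"
  assumes ws: "wavelet_setup \<phi> \<psi>" and f: "f \<in> besov \<phi> \<psi> s p" and p: "p \<ge> 1"
    and \<epsilon>: "0 < \<epsilon>" "\<epsilon> < 1"
  shows "\<exists>C>0. \<forall>(x::real^'n) (j::nat) (l::nat).
           (1 - \<epsilon>) * real j \<le> real l \<and> real l \<le> (1 + \<epsilon>) * real j \<longrightarrow>
           cmod (Qop \<psi> f l x)
             \<le> C * 2 powr ((a + (\<bar>a\<bar> + 1) * \<epsilon>) * real j) * locnorm \<psi> f s p l j (cube_idx j x) \<epsilon>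
               + C * 2 powr (\<kappa> * real j)"
proof -
  define N where "N = 2 * CARD('n) + nat \<lceil>(\<bar>a\<bar> + \<bar>\<kappa>\<bar> / (1 - \<epsilon>)) / \<epsilon>\<rceil>"
  have "(\<bar>a\<bar> + \<bar>\<kappa>\<bar> / (1 - \<epsilon>)) / \<epsilon> \<le> real N - real (2 * CARD('n))"
    unfolding N_def by linarith
  then have gain: "\<bar>a\<bar> + \<bar>\<kappa>\<bar> / (1 - \<epsilon>) \<le> \<epsilon> * (real N - real (2 * CARD('n)))"
    using \<epsilon> by (simp add: field_simps)
  obtain C where C: "0 \<le> C"
    and decay: "\<And>i v. i \<in> widx TYPE('n) \<Longrightarrow> cmod (\<psi> i v) \<le> C * (1 + supnorm v) powr (- real N)"
    using wavelet_uniform_decay[OF ws] by blast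
  obtain B where B: "0 \<le> B"
    and coef: "\<And>i l k. i \<in> widx TYPE('n) \<Longrightarrow> cmod (wcoef \<psi> f i l k) \<le> B * 2 powr (a * real l)"
    using besov_wcoef_bound[OF f p] unfolding a_def by blast
  define K where "K = real (card (widx TYPE('n))) * 16 ^ CARD('n) * C"
  have "0 \<le> K" "0 \<le> K * B" unfolding K_def using B C by simp_all
  show ?thesis
  proof (intro exI[of _ "K + K * B + 1"] conjI allI impI)
    show "0 < K + K * B + 1" using \<open>0 \<le> K\<close> \<open>0 \<le> K * B\<close> by linarith
    fix x :: "real^'n" and j l :: nat
    assume jl: "(1 - \<epsilon>) * real j \<le> real l \<and> real l \<le> (1 + \<epsilon>) * real j"
    define E where "E = 2 powr ((a + (\<bar>a\<bar> + 1) * \<epsilon>) * real j) * locnorm \<psi> f s p l j (cube_idx j x) \<epsilon>"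
    have "0 \<le> E" unfolding E_def locnorm_def by simp
    have "cmod (Qop \<psi> f l x) \<le> K * E + K * B * 2 powr (\<kappa> * real j)"
      using Qop_bound_in_j[OF p \<epsilon> C B gain[unfolded a_def] decay coef[unfolded a_def] jl[THEN conjunct1] jl[THEN conjunct2]]
      unfolding K_def E_def a_def by (simp only: mult.assoc)
    also have "\<dots> \<le> (K + K * B + 1) * E + (K + K * B + 1) * 2 powr (\<kappa> * real j)"
      using \<open>0 \<le> K\<close> \<open>0 \<le> K * B\<close> \<open>0 \<le> E\<close>
      by (intro add_mono mult_right_mono) simp_all
    finally show "cmod (Qop \<psi> f l x)
        \<le> (K + K * B + 1) * 2 powr ((a + (\<bar>a\<bar> + 1) * \<epsilon>) * real j) * locnorm \<psi> f s p l j (cube_idx j x) \<epsilon>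
          + (K + K * B + 1) * 2 powr (\<kappa> * real j)"
      unfolding E_def by (simp only: mult.assoc)
  qed
qed

theorem lemma3p5:
  fixes s p :: real
  assumes "s \<ge> 0" and "p \<ge> 1"
  shows "\<exists>\<theta>::real \<Rightarrow> real. (\<forall>e>0. \<theta> e > 0) \<and> (\<theta> \<longlongrightarrow> 0) (at_right 0) \<and>
    (\<forall>(\<phi>::real^'n \<Rightarrow> complex) \<psi>. wavelet_setup \<phi> \<psi> \<longrightarrow>
      (\<forall>f \<in> besov \<phi> \<psi> s p. \<forall>\<kappa>::real. \<forall>\<epsilon>. 0 < \<epsilon> \<and> \<epsilon> < 1 \<longrightarrow>
        (\<exists>C>0. \<forall>(x::real^'n) (j::nat) (l::nat).
           (1 - \<epsilon>) * real j \<le> real l \<and> real l \<le> (1 + \<epsilon>) * real j \<longrightarrow>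
           cmod (Qop \<psi> f l x)
             \<le> C * 2 powr ((real CARD('n) / p - s + \<theta> \<epsilon>) * real j)
                   * locnorm \<psi> f s p l j (cube_idx j x) \<epsilon>
               + C * 2 powr (\<kappa> * real j))))"
proof -
  define a where "a = real CARD('n) / p - s"
  define \<theta> where "\<theta> e = (\<bar>a\<bar> + 1) * e" for e :: real
  have "\<forall>e>0. \<theta> e > 0" unfolding \<theta>_def by (simp add: add_nonneg_pos)
  moreover have "(\<theta> \<longlongrightarrow> 0) (at_right 0)"
    unfolding \<theta>_def by (rule tendsto_mult_right_zero) (rule tendsto_ident_at)
  moreover have "\<exists>C>0. \<forall>(x::real^'n) j l.
           (1 - \<epsilon>) * real j \<le> real l \<and> real l \<le> (1 + \<epsilon>) * real j \<longrightarrow>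
           cmod (Qop \<psi> f l x)
             \<le> C * 2 powr ((real CARD('n) / p - s + \<theta> \<epsilon>) * real j)
                   * locnorm \<psi> f s p l j (cube_idx j x) \<epsilon>
               + C * 2 powr (\<kappa> * real j)"
    if "wavelet_setup \<phi> \<psi>" "f \<in> besov \<phi> \<psi> s p" "0 < \<epsilon>" "\<epsilon> < 1" for \<phi> \<psi> f \<kappa> \<epsilon>
    using Qop_local_estimate[OF that(1,2) \<open>p \<ge> 1\<close> that(3,4), of \<kappa>]
    unfolding \<theta>_def a_def by (simp add: add.assoc)
  ultimately show ?thesis by blast
qed

end
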